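(* Let $(\mathbb{X},\mathbb{0},\mathbb{1},\oplus,\otimes)$ be a selective idempotent semifield with real powers (as described in the context). Let $M,N$ be positive integers, let $x_{1},\ldots,x_{M}$ and $y_{1},\ldots,y_{M}$ be nonzero elements of $\mathbb{X}$, and let $\bm{p}=(p_{1},\ldots,p_{N})^{T}\in\mathbb{R}^{N}$. Define $\bm{y}=(y_{1},\ldots,y_{M})^{T}$, the $M\times N$ matrix $\bm{X}(\bm{p})$ with entries $(\bm{X}(\bm{p}))_{ij}=x_{i}^{p_{j}}$, the scalar $$\Delta(\bm{p})=\bigl(\bm{X}(\bm{p})(\bm{y}^{-}\bm{X}(\bm{p}))^{-}\bigr)^{-}\bm{y},$$ and the functions of a real variable $p$ $$\varphi(p)=\bigoplus_{k=1}^{M}y_{k}^{-1}x_{k}^{p},\qquad \varphi_{i}(p)=y_{i}x_{i}^{-p}\varphi(p),\quad i=1,\ldots,M.$$ Then $$\Delta(\bm{p})=\bigoplus_{i=1}^{M}\min_{1\leq j\leq N}\varphi_{i}(p_{j})=\min_{(I_{1},\ldots,I_{N})}\bigoplus_{j=1}^{N}\bigoplus_{i\in I_{j}}\varphi_{i}(p_{j}),$$ where the last minimum is taken over all ordered partitions $(I_{1},\ldots,I_{N})$ of $\{1,\ldots,M\}$ into $N$ parts (empty parts allowed), and empty sums are interpreted as $\mathbb{0}$.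
   Context: A tropical (idempotent) semifield is a set $\mathbb{X}$ with operations $\oplus,\otimes$, zero $\mathbb{0}$ and identity $\mathbb{1}$ such that $(\mathbb{X},\mathbb{0},\oplus)$ is a commutative idempotent monoid ($x\oplus x=x$), $(\mathbb{X}\setminus\{\mathbb{0}\},\mathbb{1},\otimes)$ is an abelian group, and $\otimes$ distributes over $\oplus$; the product $x\otimes y$ is written $xy$ and $x^{-1}$ denotes the multiplicative inverse of $x\neq\mathbb{0}$. The semifield is assumed selective ($x\oplus y\in\{x,y\}$), so the order $x\leq y\iff x\oplus y=y$ is total; $\oplus$ is the maximum with respect to this order, and $\min$ denotes the corresponding minimum. Powers $x^{r}$ of nonzero $x$ are defined for all real exponents $r$ (iterated products for integers, unique roots for rationals, extended to reals), with $x^{0}=\mathbb{1}$. Matrix and vector operations are defined by the usual formulas with $\oplus,\otimes$ in place of $+,\times$: $(\bm{A}\bm{C})_{ij}=\bigoplus_{k}a_{ik}c_{kj}$. For a nonzero column vector $\bm{x}=(x_{i})$, its conjugate is the row vector $\bm{x}^{-}=(x_{i}^{-})$ with $x_{i}^{-}=x_{i}^{-1}$ if $x_{i}\neq\mathbb{0}$ and $x_{i}^{-}=\mathbb{0}$ otherwise; for a nonzero row vector the conjugate is the column vector defined analogously; for a nonzero scalar the conjugate is its inverse. *)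

theory Defs
  imports Complex_Main
begin

record 'a tsf =
  tzero :: 'a
  tone  :: 'a
  tadd  :: "'a \<Rightarrow> 'a \<Rightarrow> 'a"
  tmul  :: "'a \<Rightarrow> 'a \<Rightarrow> 'a"
  tpow  :: "'a \<Rightarrow> real \<Rightarrow> 'a"

definition trop_semifield :: "'a tsf \<Rightarrow> bool" where
  "trop_semifield S \<longleftrightarrow>
     (\<forall>x y z. tadd S x (tadd S y z) = tadd S (tadd S x y) z) \<and>
     (\<forall>x y. tadd S x y = tadd S y x) \<and>
     (\<forall>x. tadd S x (tzero S) = x) \<and>
     (\<forall>x. tadd S x x = x) \<and>
     (\<forall>x y. tadd S x y = x \<or> tadd S x y = y) \<and>
     (\<forall>x y z. tmul S x (tmul S y z) = tmul S (tmul S x y) z) \<and>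
     (\<forall>x y. tmul S x y = tmul S y x) \<and>
     (\<forall>x. tmul S x (tone S) = x) \<and>
     tone S \<noteq> tzero S \<and>
     (\<forall>x y. x \<noteq> tzero S \<longrightarrow> y \<noteq> tzero S \<longrightarrow> tmul S x y \<noteq> tzero S) \<and>
     (\<forall>x. x \<noteq> tzero S \<longrightarrow> (\<exists>y. tmul S x y = tone S)) \<and>
     (\<forall>x. tmul S x (tzero S) = tzero S) \<and>
     (\<forall>x y z. tmul S x (tadd S y z) = tadd S (tmul S x y) (tmul S x z)) \<and>
     (\<forall>x. x \<noteq> tzero S \<longrightarrow>
        tpow S x 0 = tone S \<and> tpow S x 1 = x \<and>
        (\<forall>r s. tpow S x (r + s) = tmul S (tpow S x r) (tpow S x s)) \<and>
        (\<forall>r s. tpow S (tpow S x r) s = tpow S x (r * s)) \<and>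
        (\<forall>y r. y \<noteq> tzero S \<longrightarrow> tpow S (tmul S x y) r = tmul S (tpow S x r) (tpow S y r)) \<and>
        (\<forall>y r. y \<noteq> tzero S \<longrightarrow> tadd S x y = y \<longrightarrow> r \<ge> 0 \<longrightarrow>
                 tadd S (tpow S x r) (tpow S y r) = tpow S y r))"

definition tinv :: "'a tsf \<Rightarrow> 'a \<Rightarrow> 'a" where
  "tinv S x = (THE y. tmul S x y = tone S)"

definition tle :: "'a tsf \<Rightarrow> 'a \<Rightarrow> 'a \<Rightarrow> bool" where
  "tle S x y \<longleftrightarrow> tadd S x y = y"

definition tmin :: "'a tsf \<Rightarrow> 'a \<Rightarrow> 'a \<Rightarrow> 'a" where
  "tmin S x y = (if tle S x y then x else y)"

definition tsum :: "'a tsf \<Rightarrow> (nat \<Rightarrow> 'a) \<Rightarrow> nat set \<Rightarrow> 'a" where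
  "tsum S f I = foldr (\<lambda>i acc. tadd S (f i) acc) (sorted_list_of_set I) (tzero S)"

text \<open>Minimum of f j over 1 \<le> j \<le> N (N \<ge> 1).\<close>
definition tmin_range :: "'a tsf \<Rightarrow> (nat \<Rightarrow> 'a) \<Rightarrow> nat \<Rightarrow> 'a" where
  "tmin_range S f N = foldr (\<lambda>j acc. tmin S (f j) acc) [2..<N+1] (f 1)"

text \<open>Matrices as 1-based index functions; product with inner dimension K.\<close>
definition tmat_mul :: "'a tsf \<Rightarrow> nat \<Rightarrow> (nat \<Rightarrow> nat \<Rightarrow> 'a) \<Rightarrow> (nat \<Rightarrow> nat \<Rightarrow> 'a) \<Rightarrow> nat \<Rightarrow> nat \<Rightarrow> 'a" where
  "tmat_mul S K A B = (\<lambda>i j. tsum S (\<lambda>k. tmul S (A i k) (B k j)) {1..K})"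

definition tconj :: "'a tsf \<Rightarrow> (nat \<Rightarrow> nat \<Rightarrow> 'a) \<Rightarrow> nat \<Rightarrow> nat \<Rightarrow> 'a" where
  "tconj S A = (\<lambda>i j. if A j i = tzero S then tzero S else tinv S (A j i))"

definition Xmat :: "'a tsf \<Rightarrow> (nat \<Rightarrow> 'a) \<Rightarrow> (nat \<Rightarrow> real) \<Rightarrow> nat \<Rightarrow> nat \<Rightarrow> 'a" where
  "Xmat S x p = (\<lambda>i j. tpow S (x i) (p j))"

definition colvec :: "(nat \<Rightarrow> 'a) \<Rightarrow> nat \<Rightarrow> nat \<Rightarrow> 'a" where
  "colvec y = (\<lambda>i j. y i)"

text \<open>Delta(p) = (X(p) (y^- X(p))^-)^- y, a 1x1 matrix; we take its entry.\<close>
definition Delta :: "'a tsf \<Rightarrow> nat \<Rightarrow> nat \<Rightarrow> (nat \<Rightarrow> 'a) \<Rightarrow> (nat \<Rightarrow> 'a) \<Rightarrow> (nat \<Rightarrow> real) \<Rightarrow> 'a" where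
  "Delta S M N x y p =
     tmat_mul S M
       (tconj S (tmat_mul S N (Xmat S x p) (tconj S (tmat_mul S M (tconj S (colvec y)) (Xmat S x p)))))
       (colvec y) 1 1"

definition phi :: "'a tsf \<Rightarrow> nat \<Rightarrow> (nat \<Rightarrow> 'a) \<Rightarrow> (nat \<Rightarrow> 'a) \<Rightarrow> real \<Rightarrow> 'a" where
  "phi S M x y q = tsum S (\<lambda>k. tmul S (tinv S (y k)) (tpow S (x k) q)) {1..M}"

definition phi_i :: "'a tsf \<Rightarrow> nat \<Rightarrow> (nat \<Rightarrow> 'a) \<Rightarrow> (nat \<Rightarrow> 'a) \<Rightarrow> nat \<Rightarrow> real \<Rightarrow> 'a" where
  "phi_i S M x y i q = tmul S (tmul S (y i) (tpow S (x i) (- q))) (phi S M x y q)"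

definition is_ordered_partition :: "nat \<Rightarrow> nat \<Rightarrow> (nat \<Rightarrow> nat set) \<Rightarrow> bool" where
  "is_ordered_partition M N P \<longleftrightarrow>
     (\<forall>j\<in>{1..N}. P j \<subseteq> {1..M}) \<and>
     (\<forall>j\<in>{1..N}. \<forall>k\<in>{1..N}. j \<noteq> k \<longrightarrow> P j \<inter> P k = {}) \<and>
     (\<Union>j\<in>{1..N}. P j) = {1..M}"

definition part_val :: "'a tsf \<Rightarrow> nat \<Rightarrow> nat \<Rightarrow> (nat \<Rightarrow> 'a) \<Rightarrow> (nat \<Rightarrow> 'a) \<Rightarrow> (nat \<Rightarrow> real) \<Rightarrow> (nat \<Rightarrow> nat set) \<Rightarrow> 'a" where
  "part_val S M N x y p P = tsum S (\<lambda>j. tsum S (\<lambda>i. phi_i S M x y i (p j)) (P j)) {1..N}"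

definition is_tmin_of :: "'a tsf \<Rightarrow> 'a \<Rightarrow> 'a set \<Rightarrow> bool" where
  "is_tmin_of S m A \<longleftrightarrow> m \<in> A \<and> (\<forall>a\<in>A. tle S m a)"

end

theory Submission
  imports Defs
begin

(* Unfolding the matrix products, Delta(p) is the tropical sum over i of
   y_i (sum_j x_i^p_j phi(p_j)^-1)^-1.  Inversion reverses the (total) order, so
   the inverse of a maximum is the minimum of the inverses, which gives
   sum_i min_j phi_i(p_j).  Every ordered partition puts each i into some part I_j,
   so its value dominates min_j phi_i(p_j) for every i; the partition sending each i
   to an index j at which phi_i(p_j) is minimal attains the bound. *)

locale selective_semifield =
  fixes S :: "'a tsf"
  assumes trop_semifield: "trop_semifield S"
begin

sublocale tadd: semilattice_neutr "tadd S" "tzero S"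
proof
  fix a b c
  show "tadd S (tadd S a b) c = tadd S a (tadd S b c)"
    using trop_semifield unfolding trop_semifield_def by metis
  show "tadd S a b = tadd S b a" "tadd S a a = a" "tadd S a (tzero S) = a"
    using trop_semifield unfolding trop_semifield_def by metis+
qed

sublocale tmul: comm_monoid "tmul S" "tone S"
proof
  fix a b c
  show "tmul S (tmul S a b) c = tmul S a (tmul S b c)"
    using trop_semifield unfolding trop_semifield_def by metis
  show "tmul S a b = tmul S b a" "tmul S a (tone S) = a"
    using trop_semifield unfolding trop_semifield_def by metis+
qed

lemma tadd_selective: "tadd S a b = a \<or> tadd S a b = b"
  using trop_semifield unfolding trop_semifield_def by metis

lemma tone_neq_tzero: "tone S \<noteq> tzero S"
  using trop_semifield unfolding trop_semifield_def by metis

lemma tmul_neq_tzero: "a \<noteq> tzero S \<Longrightarrow> b \<noteq> tzero S \<Longrightarrow> tmul S a b \<noteq> tzero S"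
  using trop_semifield unfolding trop_semifield_def by metis

lemma tmul_inverse_exists: "a \<noteq> tzero S \<Longrightarrow> \<exists>b. tmul S a b = tone S"
  using trop_semifield unfolding trop_semifield_def by metis

lemma tmul_tzero: "tmul S a (tzero S) = tzero S"
  using trop_semifield unfolding trop_semifield_def by metis

lemma tmul_tadd_distrib: "tmul S a (tadd S b c) = tadd S (tmul S a b) (tmul S a c)"
  using trop_semifield unfolding trop_semifield_def by metis

lemma tpow_zero: "a \<noteq> tzero S \<Longrightarrow> tpow S a 0 = tone S"
  using trop_semifield unfolding trop_semifield_def by metis

lemma tpow_add: "a \<noteq> tzero S \<Longrightarrow> tpow S a (r + s) = tmul S (tpow S a r) (tpow S a s)"
  using trop_semifield unfolding trop_semifield_def by metis

lemma tle_refl: "tle S a a"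
  by (simp add: tle_def)

lemma tle_antisym: "tle S a b \<Longrightarrow> tle S b a \<Longrightarrow> a = b"
  unfolding tle_def by (metis tadd.commute)

lemma tle_trans: "tle S a b \<Longrightarrow> tle S b c \<Longrightarrow> tle S a c"
  unfolding tle_def by (metis tadd.assoc)

lemma tle_total: "tle S a b \<or> tle S b a"
  unfolding tle_def by (metis tadd.commute tadd_selective)

lemma tzero_tle: "tle S (tzero S) a"
  unfolding tle_def by (simp add: tadd.commute)

lemma tadd_tle_iff: "tle S (tadd S a b) c \<longleftrightarrow> tle S a c \<and> tle S b c"
  unfolding tle_def by (metis tadd.assoc tadd.commute tadd.left_idem)

lemma tmul_tle_mono: "tle S a b \<Longrightarrow> tle S (tmul S c a) (tmul S c b)"
  unfolding tle_def by (metis tmul_tadd_distrib)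

lemma tle_tmin_iff: "tle S c (tmin S a b) \<longleftrightarrow> tle S c a \<and> tle S c b"
  using tle_total[of a b] tle_trans[of c a b] tle_trans[of c b a] unfolding tmin_def by auto

lemma tinv_eqI:
  assumes "tmul S a b = tone S"
  shows "tinv S a = b"
  unfolding tinv_def
proof (rule the_equality)
  fix c assume "tmul S a c = tone S"
  then show "c = b" by (metis assms tmul.assoc tmul.commute tmul.comm_neutral)
qed fact

lemma tmul_tinv: "a \<noteq> tzero S \<Longrightarrow> tmul S a (tinv S a) = tone S"
  using tmul_inverse_exists tinv_eqI by metis

lemma tinv_neq_tzero: "a \<noteq> tzero S \<Longrightarrow> tinv S a \<noteq> tzero S"
  by (metis tmul_tinv tmul_tzero tone_neq_tzero)

lemma tinv_tinv: "a \<noteq> tzero S \<Longrightarrow> tinv S (tinv S a) = a"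
  by (rule tinv_eqI) (simp add: tmul.commute tmul_tinv)

lemma tinv_tmul:
  assumes "a \<noteq> tzero S" "b \<noteq> tzero S"
  shows "tinv S (tmul S a b) = tmul S (tinv S a) (tinv S b)"
proof (rule tinv_eqI)
  have "tmul S (tmul S a b) (tmul S (tinv S a) (tinv S b))
      = tmul S (tmul S a (tinv S a)) (tmul S b (tinv S b))"
    by (simp only: tmul.assoc tmul.left_commute)
  then show "tmul S (tmul S a b) (tmul S (tinv S a) (tinv S b)) = tone S"
    by (simp add: assms tmul_tinv)
qed

lemma tinv_tpow: "a \<noteq> tzero S \<Longrightarrow> tinv S (tpow S a r) = tpow S a (- r)"
  by (rule tinv_eqI) (metis tpow_add tpow_zero add.right_inverse)

lemma tpow_neq_tzero: "a \<noteq> tzero S \<Longrightarrow> tpow S a r \<noteq> tzero S"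
  by (metis tinv_tpow tpow_add tpow_zero add.right_inverse tmul.commute tmul_tzero tone_neq_tzero)

lemma tinv_antimono:
  assumes "a \<noteq> tzero S" "tle S a b"
  shows "tle S (tinv S b) (tinv S a)"
proof -
  have "b \<noteq> tzero S" using assms tzero_tle tle_antisym by blast
  have "tle S (tmul S (tmul S (tinv S a) (tinv S b)) a) (tmul S (tmul S (tinv S a) (tinv S b)) b)"
    using assms(2) by (rule tmul_tle_mono)
  moreover have "tmul S (tmul S (tinv S a) (tinv S b)) a = tmul S (tinv S b) (tmul S a (tinv S a))"
    by (metis tmul.assoc tmul.commute)
  moreover have "tmul S (tmul S (tinv S a) (tinv S b)) b = tmul S (tinv S a) (tmul S b (tinv S b))"
    by (metis tmul.assoc tmul.commute)
  ultimately show ?thesis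
    using assms(1) \<open>b \<noteq> tzero S\<close> by (simp add: tmul_tinv)
qed

lemma tsum_tle_iff:
  assumes "finite I"
  shows "tle S (tsum S f I) c \<longleftrightarrow> (\<forall>i\<in>I. tle S (f i) c)"
proof -
  have "tle S (foldr (\<lambda>i acc. tadd S (f i) acc) xs (tzero S)) c \<longleftrightarrow> (\<forall>i\<in>set xs. tle S (f i) c)"
    for xs by (induction xs) (auto simp: tzero_tle tadd_tle_iff)
  then show ?thesis
    using assms by (simp add: tsum_def)
qed

lemma tle_tsum: "finite I \<Longrightarrow> i \<in> I \<Longrightarrow> tle S (f i) (tsum S f I)"
  using tsum_tle_iff tle_refl by blast

lemma tsum_attained:
  assumes "finite I" "I \<noteq> {}"
  obtains i where "i \<in> I" "tsum S f I = f i"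
proof -
  have "\<exists>i\<in>set xs. foldr (\<lambda>i acc. tadd S (f i) acc) xs (tzero S) = f i" if "xs \<noteq> []" for xs
    using that
  proof (induction xs)
    case (Cons a xs)
    show ?case
    proof (cases "xs = []")
      case False
      then obtain i where "i \<in> set xs" "foldr (\<lambda>i acc. tadd S (f i) acc) xs (tzero S) = f i"
        using Cons.IH by blast
      then show ?thesis
        using tadd_selective[of "f a" "f i"] by auto
    qed simp
  qed simp
  from this[of "sorted_list_of_set I"] show ?thesis
    using assms that by (auto simp: tsum_def)
qed

lemma tsum_cong: "(\<And>i. i \<in> I \<Longrightarrow> f i = g i) \<Longrightarrow> tsum S f I = tsum S g I"
  by (cases "finite I") (auto simp: tsum_def intro!: foldr_cong)

lemma tsum_neq_tzero: "finite I \<Longrightarrow> i \<in> I \<Longrightarrow> f i \<noteq> tzero S \<Longrightarrow> tsum S f I \<noteq> tzero S"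
  by (metis tle_tsum tzero_tle tle_antisym)

lemma tmin_range_tle:
  assumes "j \<in> {1..N}"
  shows "tle S (tmin_range S f N) (f j)"
proof -
  define js where "js = [2..<N+1]"
  have "tle S c (foldr (\<lambda>j acc. tmin S (f j) acc) js' a) \<longleftrightarrow> tle S c a \<and> (\<forall>j\<in>set js'. tle S c (f j))"
    for c a js' by (induction js') (auto simp: tle_tmin_iff)
  then have "tle S (tmin_range S f N) (f 1) \<and> (\<forall>j\<in>set js. tle S (tmin_range S f N) (f j))"
    using tle_refl unfolding tmin_range_def js_def[symmetric] by blast
  moreover have "set js = {2..N}"
    unfolding js_def by auto
  ultimately show ?thesis
    using assms by (cases "j = 1") auto
qed

lemma tmin_range_attained:
  assumes "N \<ge> 1"
  obtains j where "j \<in> {1..N}" "tmin_range S f N = f j"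
proof -
  define js where "js = [2..<N+1]"
  have "foldr (\<lambda>j acc. tmin S (f j) acc) js' a = a
      \<or> (\<exists>j\<in>set js'. foldr (\<lambda>j acc. tmin S (f j) acc) js' a = f j)" for a js'
    by (induction js') (auto simp: tmin_def)
  then have "tmin_range S f N = f 1 \<or> (\<exists>j\<in>set js. tmin_range S f N = f j)"
    unfolding tmin_range_def js_def[symmetric] by blast
  moreover have "set js = {2..N}"
    unfolding js_def by auto
  ultimately consider "tmin_range S f N = f 1" | j where "j \<in> {2..N}" "tmin_range S f N = f j"
    by blast
  then show ?thesis
  proof cases
    case 1
    then show ?thesis
      using assms by (intro that[of 1]) auto
  next
    case (2 j)
    then show ?thesis
      by (intro that[of j]) auto
  qed
qed

lemma tmin_range_eqI:
  assumes "j \<in> {1..N}" "\<And>k. k \<in> {1..N} \<Longrightarrow> tle S (f j) (f k)"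
  shows "tmin_range S f N = f j"
proof -
  obtain k where "k \<in> {1..N}" "tmin_range S f N = f k"
    using tmin_range_attained[of N f] assms(1) by auto
  then show ?thesis
    using assms tmin_range_tle tle_antisym by metis
qed

lemma tmul_tinv_tsum_eq_tmin_range:
  assumes "N \<ge> 1" "\<And>j. j \<in> {1..N} \<Longrightarrow> g j \<noteq> tzero S"
  shows "tmul S c (tinv S (tsum S g {1..N})) = tmin_range S (\<lambda>j. tmul S c (tinv S (g j))) N"
proof -
  obtain j where j: "j \<in> {1..N}" "tsum S g {1..N} = g j"
    using tsum_attained[of "{1..N}" g] assms(1) by auto
  have "tle S (tmul S c (tinv S (g j))) (tmul S c (tinv S (g k)))" if "k \<in> {1..N}" for k
    using tle_tsum[of "{1..N}" k g] that j assms(2) by (simp add: tinv_antimono tmul_tle_mono)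
  then show ?thesis
    using tmin_range_eqI[of j N "\<lambda>j. tmul S c (tinv S (g j))"] j by simp
qed

lemma tsum_tmin_range_tle_partition:
  assumes P: "is_ordered_partition M N P"
  shows "tle S (tsum S (\<lambda>i. tmin_range S (t i) N) {1..M}) (tsum S (\<lambda>j. tsum S (\<lambda>i. t i j) (P j)) {1..N})"
proof -
  have "tle S (tmin_range S (t i) N) (tsum S (\<lambda>j. tsum S (\<lambda>i. t i j) (P j)) {1..N})"
    if i: "i \<in> {1..M}" for i
  proof -
    obtain j where j: "j \<in> {1..N}" "i \<in> P j"
      using P i unfolding is_ordered_partition_def by blast
    have "finite (P j)"
      using P j(1) unfolding is_ordered_partition_def by (meson finite_atLeastAtMost finite_subset)
    then have "tle S (t i j) (tsum S (\<lambda>i. t i j) (P j))"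
      using j(2) by (rule tle_tsum)
    moreover have "tle S (tsum S (\<lambda>i. t i j) (P j)) (tsum S (\<lambda>j. tsum S (\<lambda>i. t i j) (P j)) {1..N})"
      using tle_tsum[of "{1..N}" j "\<lambda>j. tsum S (\<lambda>i. t i j) (P j)"] j(1) by simp
    ultimately show ?thesis
      using tmin_range_tle[OF j(1)] tle_trans by blast
  qed
  then show ?thesis
    by (simp add: tsum_tle_iff)
qed

lemma partition_attaining_tsum_tmin_range:
  assumes "N \<ge> 1"
  obtains P where "is_ordered_partition M N P"
    "tsum S (\<lambda>j. tsum S (\<lambda>i. t i j) (P j)) {1..N} = tsum S (\<lambda>i. tmin_range S (t i) N) {1..M}"
proof -
  let ?m = "tsum S (\<lambda>i. tmin_range S (t i) N) {1..M}"
  have "\<exists>j. j \<in> {1..N} \<and> tmin_range S (t i) N = t i j" for i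
    using tmin_range_attained[OF assms, of "t i"] by blast
  then obtain J where J: "\<And>i. J i \<in> {1..N}" "\<And>i. tmin_range S (t i) N = t i (J i)"
    by metis
  define P where "P j = {i \<in> {1..M}. J i = j}" for j
  have P: "is_ordered_partition M N P"
    unfolding is_ordered_partition_def P_def using J(1) by auto
  have "tle S (tsum S (\<lambda>i. t i j) (P j)) ?m" for j
  proof -
    have "tle S (t i j) ?m" if "i \<in> P j" for i
      using that J(2)[of i] tle_tsum[of "{1..M}" i "\<lambda>i. tmin_range S (t i) N"]
      unfolding P_def by auto
    then show ?thesis
      by (simp add: P_def tsum_tle_iff)
  qed
  then have "tle S (tsum S (\<lambda>j. tsum S (\<lambda>i. t i j) (P j)) {1..N}) ?m"
    by (simp add: tsum_tle_iff)
  with tsum_tmin_range_tle_partition[OF P] show ?thesis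
    using that P tle_antisym by blast
qed

lemma is_tmin_of_partition_sums:
  assumes "N \<ge> 1"
  shows "is_tmin_of S (tsum S (\<lambda>i. tmin_range S (t i) N) {1..M})
           {tsum S (\<lambda>j. tsum S (\<lambda>i. t i j) (P j)) {1..N} | P. is_ordered_partition M N P}"
proof -
  obtain P where "is_ordered_partition M N P"
    "tsum S (\<lambda>j. tsum S (\<lambda>i. t i j) (P j)) {1..N} = tsum S (\<lambda>i. tmin_range S (t i) N) {1..M}"
    using partition_attaining_tsum_tmin_range[OF assms] .
  then have "tsum S (\<lambda>i. tmin_range S (t i) N) {1..M}
      \<in> {tsum S (\<lambda>j. tsum S (\<lambda>i. t i j) (P j)) {1..N} | P. is_ordered_partition M N P}"
    by (metis (mono_tags, lifting) mem_Collect_eq)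
  moreover have "\<forall>v \<in> {tsum S (\<lambda>j. tsum S (\<lambda>i. t i j) (P j)) {1..N} | P. is_ordered_partition M N P}.
      tle S (tsum S (\<lambda>i. tmin_range S (t i) N) {1..M}) v"
    using tsum_tmin_range_tle_partition by blast
  ultimately show ?thesis
    unfolding is_tmin_of_def ..
qed

lemma phi_i_eq:
  assumes "x i \<noteq> tzero S" "phi S M x y q \<noteq> tzero S"
  shows "phi_i S M x y i q = tmul S (y i) (tinv S (tmul S (tpow S (x i) q) (tinv S (phi S M x y q))))"
  using assms
  by (simp add: phi_i_def tinv_tmul tinv_tinv tinv_tpow tpow_neq_tzero tinv_neq_tzero tmul.assoc)

context
  fixes M N :: nat and x y :: "nat \<Rightarrow> 'a" and p :: "nat \<Rightarrow> real"
  assumes M: "M \<ge> 1" and N: "N \<ge> 1"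
    and x: "\<forall>i\<in>{1..M}. x i \<noteq> tzero S" and y: "\<forall>i\<in>{1..M}. y i \<noteq> tzero S"
begin

lemma phi_neq_tzero: "phi S M x y q \<noteq> tzero S"
  unfolding phi_def using M x y
  by (intro tsum_neq_tzero[of _ 1]) (simp_all add: tmul_neq_tzero tinv_neq_tzero tpow_neq_tzero)

lemma Delta_eq_tsum_tinv:
  "Delta S M N x y p = tsum S (\<lambda>i. tmul S (y i)
     (tinv S (tsum S (\<lambda>j. tmul S (tpow S (x i) (p j)) (tinv S (phi S M x y (p j)))) {1..N}))) {1..M}"
proof -
  have entry: "tmat_mul S K A B i j = tsum S (\<lambda>k. tmul S (A i k) (B k j)) {1..K}" for K A B i j
    by (simp add: tmat_mul_def)
  define C where "C = tmat_mul S M (tconj S (colvec y)) (Xmat S x p)"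
  define d where "d i = tsum S (\<lambda>j. tmul S (tpow S (x i) (p j)) (tinv S (phi S M x y (p j)))) {1..N}" for i
  have C: "C 1 j = phi S M x y (p j)" for j
    unfolding C_def entry phi_def using y by (intro tsum_cong) (simp add: tconj_def colvec_def Xmat_def)
  define A where "A = tmat_mul S N (Xmat S x p) (tconj S C)"
  have A: "A i 1 = d i" for i
    unfolding A_def entry d_def tconj_def C by (simp add: phi_neq_tzero Xmat_def)
  have d: "d i \<noteq> tzero S" if "i \<in> {1..M}" for i
    unfolding d_def using N x phi_neq_tzero that
    by (intro tsum_neq_tzero[of _ 1]) (simp_all add: tmul_neq_tzero tinv_neq_tzero tpow_neq_tzero)
  have "Delta S M N x y p = tsum S (\<lambda>k. tmul S (tconj S A 1 k) (colvec y k 1)) {1..M}"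
    unfolding Delta_def A_def C_def by (rule entry)
  also have "\<dots> = tsum S (\<lambda>i. tmul S (y i) (tinv S (d i))) {1..M}"
    unfolding tconj_def A colvec_def using d by (intro tsum_cong) (simp add: tmul.commute)
  finally show ?thesis
    unfolding d_def .
qed

lemma tmin_range_phi_i_eq:
  assumes i: "i \<in> {1..M}"
  shows "tmin_range S (\<lambda>j. phi_i S M x y i (p j)) N
    = tmul S (y i) (tinv S (tsum S (\<lambda>j. tmul S (tpow S (x i) (p j)) (tinv S (phi S M x y (p j)))) {1..N}))"
    (is "_ = tmul S (y i) (tinv S (tsum S ?g {1..N}))")
proof -
  have g: "?g j \<noteq> tzero S" for j
    using i x phi_neq_tzero by (simp add: tmul_neq_tzero tpow_neq_tzero tinv_neq_tzero)
  have "tmin_range S (\<lambda>j. phi_i S M x y i (p j)) N = tmin_range S (\<lambda>j. tmul S (y i) (tinv S (?g j))) N"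
    using i x phi_neq_tzero by (simp add: phi_i_eq)
  also have "\<dots> = tmul S (y i) (tinv S (tsum S ?g {1..N}))"
    using N g by (rule tmul_tinv_tsum_eq_tmin_range[symmetric])
  finally show ?thesis .
qed

lemma Delta_eq_tsum_tmin_range:
  "Delta S M N x y p = tsum S (\<lambda>i. tmin_range S (\<lambda>j. phi_i S M x y i (p j)) N) {1..M}"
  unfolding Delta_eq_tsum_tinv by (rule tsum_cong) (rule tmin_range_phi_i_eq[symmetric])

end

end

theorem mainTheorem1:
  fixes S :: "'a tsf" and M N :: nat and x y :: "nat \<Rightarrow> 'a" and p :: "nat \<Rightarrow> real"
  assumes "trop_semifield S"
    and "M \<ge> 1" and "N \<ge> 1"
    and "\<forall>i\<in>{1..M}. x i \<noteq> tzero S"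
    and "\<forall>i\<in>{1..M}. y i \<noteq> tzero S"
  shows "Delta S M N x y p = tsum S (\<lambda>i. tmin_range S (\<lambda>j. phi_i S M x y i (p j)) N) {1..M}
       \<and> is_tmin_of S (Delta S M N x y p)
           {part_val S M N x y p P | P. is_ordered_partition M N P}"
proof -
  interpret selective_semifield S
    using assms(1) by unfold_locales
  have "Delta S M N x y p = tsum S (\<lambda>i. tmin_range S (\<lambda>j. phi_i S M x y i (p j)) N) {1..M}"
    using assms(2-) by (rule Delta_eq_tsum_tmin_range)
  moreover have "is_tmin_of S (tsum S (\<lambda>i. tmin_range S (\<lambda>j. phi_i S M x y i (p j)) N) {1..M})
      {part_val S M N x y p P | P. is_ordered_partition M N P}"
    unfolding part_val_def using assms(3) by (rule is_tmin_of_partition_sums)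
  ultimately show ?thesis
    by simp
qed

end
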